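(* There is $p_0$ such that the following holds for every prime $p>p_0$. Let $S\subseteq\mathbb{Z}_p$ with $p/3<|S|<2p/5$, and for $n\in\mathbb{Z}_p$ let $r(n)$ be the number of pairs $(s_1,s_2)\in S\times S$ with $s_1+s_2=n$. Then for every nonempty $T\subseteq\mathbb{Z}_p$, $$\sum_{n\in T} r(n)<0.93\,|S|\,(|S|\,|T|)^{1/2}.$$ *)

theory Defs
  imports Complex_Main "HOL-Computational_Algebra.Primes"
begin

text \<open>Z_p is modelled as the residues {0..<p} with addition modulo p.
  rep_count p S n = number of pairs (s1,s2) in S x S with s1 + s2 = n in Z_p.\<close>

definition rep_count :: "nat \<Rightarrow> nat set \<Rightarrow> nat \<Rightarrow> nat" where
  "rep_count p S n = card {(s1, s2). s1 \<in> S \<and> s2 \<in> S \<and> (s1 + s2) mod p = n}"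

end

theory Submission
  imports Defs "HOL-Number_Theory.Cong"
begin

text \<open>Pollard's theorem: for A, B in Z_p with |A| + |B| <= p and t <= min |A| |B|, the
  capped counts satisfy sum_x min(t, r_{A,B}(x)) >= t (|A| + |B| - t). It is proved by induction
  on |B| via Dyson's e-transform (A, B) \<mapsto> (A \<union> (B + e), B \<inter> (A - e)), which preserves
  |A| + |B| and can only lower the capped counts. For A = B = S and cap j it says that at most
  |S|^2 - j (2|S| - j) representations lie above height j, hence
  sum_{n in T} r(n) <= j |T| + |S|^2 - j (2|S| - j). The choice j = |S| - |T|/2 bounds this by
  |T| (4|S| - |T|)/4 + 1/4, and t (4s - t) <= 3.08 s sqrt(s t) turns that into
  0.77 |S| sqrt(|S| |T|) + 1/4.\<close>

definition rep_pairs :: "nat \<Rightarrow> nat set \<Rightarrow> nat set \<Rightarrow> nat \<Rightarrow> (nat \<times> nat) set" where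
  "rep_pairs p A B x = {(a, b). a \<in> A \<and> b \<in> B \<and> (a + b) mod p = x}"

definition reps :: "nat \<Rightarrow> nat set \<Rightarrow> nat set \<Rightarrow> nat \<Rightarrow> nat" where
  "reps p A B x = card (rep_pairs p A B x)"

definition capped_rep_sum :: "nat \<Rightarrow> nat \<Rightarrow> nat set \<Rightarrow> nat set \<Rightarrow> nat" where
  "capped_rep_sum p t A B = (\<Sum>x<p. min t (reps p A B x))"

definition shift :: "nat \<Rightarrow> nat \<Rightarrow> nat \<Rightarrow> nat" where
  "shift p e x = (x + e) mod p"

lemma rep_count_eq_reps: "rep_count p S n = reps p S S n"
  unfolding rep_count_def reps_def rep_pairs_def by simp

lemma shift_less: "0 < p \<Longrightarrow> shift p e x < p"
  by (simp add: shift_def)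

lemma inj_on_shift: "inj_on (shift p e) {..<p}"
proof (rule inj_onI)
  fix x y assume "x \<in> {..<p}" "y \<in> {..<p}" "shift p e x = shift p e y"
  then show "x = y"
    by (metis cong_add_rcancel_nat cong_def lessThan_iff mod_less shift_def)
qed

lemma shift_shift: "shift p d (shift p e x) = shift p (d + e) x"
  unfolding shift_def mod_add_left_eq by (simp add: ac_simps)

lemma shift_inverse: "x < p \<Longrightarrow> e \<le> p \<Longrightarrow> shift p (p - e) (shift p e x) = x"
  by (simp add: shift_shift) (simp add: shift_def)

lemma shift_add_shift_inverse: "e \<le> p \<Longrightarrow> (shift p e a + shift p (p - e) b) mod p = (a + b) mod p"
proof -
  assume "e \<le> p"
  have "(shift p e a + shift p (p - e) b) mod p = (a + e + (b + (p - e))) mod p"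
    by (simp add: shift_def mod_add_eq)
  also have "a + e + (b + (p - e)) = a + b + p"
    using \<open>e \<le> p\<close> by simp
  finally show ?thesis by simp
qed

lemma finite_rep_pairs: "finite A \<Longrightarrow> finite B \<Longrightarrow> finite (rep_pairs p A B x)"
  by (rule finite_subset[of _ "A \<times> B"]) (auto simp: rep_pairs_def)

lemma reps_commute: "reps p A B x = reps p B A x"
proof -
  have "rep_pairs p B A x = prod.swap ` rep_pairs p A B x"
    by (auto simp: rep_pairs_def add.commute image_iff)
  then show ?thesis
    by (simp add: reps_def card_image)
qed

lemma reps_shift:
  assumes "A \<subseteq> {..<p}" "B \<subseteq> {..<p}" "e \<le> p"
  shows "reps p (shift p e ` A) (shift p (p - e) ` B) x = reps p A B x"
proof -
  have "inj_on (map_prod (shift p e) (shift p (p - e))) ({..<p} \<times> {..<p})"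
    by (intro map_prod_inj_on inj_on_shift)
  moreover have "rep_pairs p A B x \<subseteq> {..<p} \<times> {..<p}"
    using assms(1,2) by (auto simp: rep_pairs_def)
  ultimately have "inj_on (map_prod (shift p e) (shift p (p - e))) (rep_pairs p A B x)"
    by (rule inj_on_subset)
  moreover have "rep_pairs p (shift p e ` A) (shift p (p - e) ` B) x
      = map_prod (shift p e) (shift p (p - e)) ` rep_pairs p A B x"
    using shift_add_shift_inverse[OF assms(3)] by (auto simp: rep_pairs_def)
  ultimately show ?thesis
    by (simp add: reps_def card_image)
qed

lemma reps_split_left:
  assumes "finite A" "finite B"
  shows "reps p A B x = reps p (A \<inter> C) B x + reps p (A - C) B x"
proof -
  have "rep_pairs p A B x = rep_pairs p (A \<inter> C) B x \<union> rep_pairs p (A - C) B x"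
    by (auto simp: rep_pairs_def)
  moreover have "rep_pairs p (A \<inter> C) B x \<inter> rep_pairs p (A - C) B x = {}"
    by (auto simp: rep_pairs_def)
  ultimately show ?thesis
    using assms by (simp add: reps_def finite_rep_pairs card_Un_disjoint)
qed

lemma reps_split_right:
  "finite A \<Longrightarrow> finite B \<Longrightarrow> reps p A B x = reps p A (B \<inter> C) x + reps p A (B - C) x"
  using reps_split_left[of B A p x C] by (simp add: reps_commute)

lemma reps_le_card_right:
  assumes "A \<subseteq> {..<p}" "finite B"
  shows "reps p A B x \<le> card B"
proof -
  have "inj_on snd (rep_pairs p A B x)"
  proof (rule inj_onI)
    fix u v assume "u \<in> rep_pairs p A B x" "v \<in> rep_pairs p A B x" "snd u = snd v"
    then obtain a a' b where ab: "u = (a, b)" "v = (a', b)" "a \<in> A" "a' \<in> A"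
      and "shift p b a = shift p b a'"
      by (auto simp: rep_pairs_def shift_def)
    then have "a = a'"
      using inj_onD[OF inj_on_shift] assms(1) by blast
    then show "u = v"
      using ab by simp
  qed
  moreover have "snd ` rep_pairs p A B x \<subseteq> B"
    by (auto simp: rep_pairs_def)
  ultimately show ?thesis
    unfolding reps_def using assms(2) card_inj_on_le by blast
qed

lemma sum_reps:
  assumes "finite A" "finite B" "0 < p"
  shows "(\<Sum>x<p. reps p A B x) = card A * card B"
proof -
  have "card A * card B = card (A \<times> B)"
    by (rule card_cartesian_product[symmetric])
  also have "A \<times> B = (\<Union>x<p. rep_pairs p A B x)"
    using assms(3) by (auto simp: rep_pairs_def)
  also have "card (\<Union>x<p. rep_pairs p A B x) = (\<Sum>x<p. reps p A B x)"
    unfolding reps_def using assms(1,2)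
    by (intro card_UN_disjoint) (auto simp: finite_rep_pairs, auto simp: rep_pairs_def)
  finally show ?thesis ..
qed

subsection \<open>Pollard's theorem\<close>

lemma shift_closed_eq_lessThan:
  assumes p: "prime p" and A: "A \<subseteq> {..<p}" "A \<noteq> {}"
    and d: "0 < d" "d < p" and closed: "\<And>a. a \<in> A \<Longrightarrow> shift p d a \<in> A"
  shows "A = {..<p}"
proof -
  obtain a0 where a0: "a0 \<in> A" using A(2) by blast
  have orbit: "(a0 + k * d) mod p \<in> A" for k
  proof (induction k)
    case 0
    then show ?case using a0 A(1) by auto
  next
    case (Suc k)
    then have "shift p d ((a0 + k * d) mod p) \<in> A" by (rule closed)
    then show ?case
      by (simp add: shift_def mod_add_right_eq ac_simps)
  qed
  have "coprime d p"
    using p d by (metis coprime_commute dvd_imp_le not_le prime_imp_coprime)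
  have "inj_on (\<lambda>k. (a0 + k * d) mod p) {..<p}"
  proof (rule inj_onI)
    fix k l assume "k \<in> {..<p}" "l \<in> {..<p}" "(a0 + k * d) mod p = (a0 + l * d) mod p"
    then have "[k * d = l * d] (mod p)" "k < p" "l < p"
      by (auto simp: cong_def[symmetric] cong_add_lcancel_nat)
    then show "k = l"
      using \<open>coprime d p\<close> by (metis cong_def cong_mult_rcancel_nat mod_less)
  qed
  then have "card ((\<lambda>k. (a0 + k * d) mod p) ` {..<p}) = card {..<p::nat}"
    by (simp add: card_image)
  moreover have "(\<lambda>k. (a0 + k * d) mod p) ` {..<p} \<subseteq> A"
    using orbit by auto
  ultimately have "card {..<p} \<le> card A"
    using A(1) by (metis card_mono finite_lessThan finite_subset)
  then show ?thesis
    using A(1) by (metis card_seteq finite_lessThan)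
qed

lemma exists_proper_shift:
  assumes p: "prime p" and AB: "A \<subseteq> {..<p}" "B \<subseteq> {..<p}" "A \<noteq> {}" "A \<noteq> {..<p}"
    and B2: "2 \<le> card B"
  shows "\<exists>e<p. {b \<in> B. shift p e b \<in> A} \<noteq> {} \<and> {b \<in> B. shift p e b \<in> A} \<noteq> B"
proof -
  obtain b1 b2 where b: "b1 \<in> B" "b2 \<in> B" "b1 \<noteq> b2"
    using B2 by (force simp: numeral_2_eq_2 card_le_Suc_iff)
  have p0: "0 < p" using p prime_gt_0_nat by blast
  have b_less: "b1 < p" "b2 < p" using b AB(2) by auto
  define d where "d = shift p (p - b1) b2"
  have "shift p (p - b1) b2 \<noteq> shift p (p - b1) b1"
    using inj_onD[OF inj_on_shift, of p "p - b1" b2 b1] b b_less by auto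
  moreover have "shift p (p - b1) b1 = 0"
    using b_less by (simp add: shift_def)
  ultimately have "0 < d"
    unfolding d_def by simp
  moreover have "d < p"
    unfolding d_def using p0 by (rule shift_less)
  ultimately obtain a where a: "a \<in> A" "shift p d a \<notin> A"
    using shift_closed_eq_lessThan[OF p AB(1,3)] AB(4) by metis
  define e where "e = shift p (p - b1) a"
  have "a < p" using a AB(1) by auto
  then have "shift p e b1 = a"
    unfolding e_def using b_less by (simp add: shift_def mod_add_right_eq)
  moreover have "shift p e b2 = shift p d a"
    unfolding d_def e_def shift_def by (simp add: mod_add_right_eq add_ac)
  ultimately have "b1 \<in> {b \<in> B. shift p e b \<in> A}" "b2 \<notin> {b \<in> B. shift p e b \<in> A}"
    using a b by auto
  moreover have "e < p"
    unfolding e_def using p0 by (rule shift_less)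
  ultimately show ?thesis
    using b(2) by (intro exI[of _ e] conjI) auto
qed

text \<open>Here A_e = A \<union> (B + e) and B_e = B \<inter> (A - e); translation by -e is shift by p - e.\<close>

locale e_transform =
  fixes p e :: nat and A B :: "nat set"
  assumes A_sub: "A \<subseteq> {..<p}" and B_sub: "B \<subseteq> {..<p}" and e_less: "e < p"
begin

abbreviation A_e :: "nat set" where "A_e \<equiv> A \<union> shift p e ` B"

abbreviation B_e :: "nat set" where "B_e \<equiv> {b \<in> B. shift p e b \<in> A}"

lemma finite_A: "finite A" and finite_B: "finite B"
  using A_sub B_sub finite_subset by blast+

lemma shift_B_e: "shift p e ` B_e = A \<inter> shift p e ` B"
  by auto

lemma shift_inverse_image_diff: "shift p (p - e) ` (shift p e ` B - A) = B - B_e"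
proof -
  have inv: "shift p (p - e) (shift p e b) = b" if "b \<in> B" for b
    using that B_sub e_less by (intro shift_inverse) auto
  show ?thesis
  proof (intro equalityI subsetI)
    fix b assume "b \<in> shift p (p - e) ` (shift p e ` B - A)"
    then obtain b0 where "b0 \<in> B" "shift p e b0 \<notin> A" "b = shift p (p - e) (shift p e b0)"
      by auto
    then show "b \<in> B - B_e"
      using inv by auto
  next
    fix b assume "b \<in> B - B_e"
    then show "b \<in> shift p (p - e) ` (shift p e ` B - A)"
      by (intro image_eqI[where x = "shift p e b"]) (auto simp: inv)
  qed
qed

lemma reps_e_transform:
  "reps p A B x = reps p A_e B_e x + reps p (A - shift p e ` B) (B - B_e) x"
proof -
  let ?C = "shift p e ` B"
  have fin: "finite ?C" "finite B_e" "finite (B - B_e)"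
    using finite_B by auto
  \<comment> \<open>(a, b) \<mapsto> (b + e, a - e) matches the pairs that A_e gains with those that B_e loses.\<close>
  have swap: "reps p (?C - A) B_e x = reps p (A \<inter> ?C) (B - B_e) x"
  proof -
    have "reps p (?C - A) B_e x = reps p B_e (?C - A) x"
      by (rule reps_commute)
    also have "\<dots> = reps p (shift p e ` B_e) (shift p (p - e) ` (?C - A)) x"
      using B_sub A_sub e_less shift_less[of p e] by (intro reps_shift[symmetric]) auto
    finally show ?thesis
      by (simp only: shift_B_e shift_inverse_image_diff)
  qed
  have "reps p A B x = reps p A B_e x + reps p A (B - B_e) x"
    using reps_split_right[OF finite_A finite_B, of p x B_e] by (simp add: Int_absorb1)
  moreover have "reps p A (B - B_e) x = reps p (A \<inter> ?C) (B - B_e) x + reps p (A - ?C) (B - B_e) x"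
    using finite_A fin(3) by (rule reps_split_left)
  moreover have "reps p A_e B_e x = reps p A B_e x + reps p (?C - A) B_e x"
    using reps_split_left[of A_e B_e p x A] finite_A fin by (simp add: Int_absorb2 Un_Diff)
  ultimately show ?thesis
    using swap by linarith
qed

lemma card_e_transform:
  "card A_e + card B_e = card A + card B"
  "card (A - shift p e ` B) = card A - card B_e"
  "card (B - B_e) = card B - card B_e"
proof -
  have inj: "inj_on (shift p e) B"
    using inj_on_shift B_sub by (rule inj_on_subset)
  have "card (shift p e ` B_e) = card B_e"
    using inj by (intro card_image inj_on_subset[OF inj]) auto
  then have "card (A \<inter> shift p e ` B) = card B_e"
    by (simp only: shift_B_e)
  moreover have "card (shift p e ` B) = card B"
    using inj by (rule card_image)
  moreover have "card A_e + card (A \<inter> shift p e ` B) = card A + card (shift p e ` B)"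
    using card_Un_Int[of A "shift p e ` B"] finite_A finite_B by simp
  ultimately show "card A_e + card B_e = card A + card B"
    "card (A - shift p e ` B) = card A - card B_e"
    using finite_A by (simp_all add: card_Diff_subset_Int)
  show "card (B - B_e) = card B - card B_e"
    using finite_B by (intro card_Diff_subset) auto
qed

lemma capped_rep_sum_e_transform:
  "capped_rep_sum p u A_e B_e + capped_rep_sum p v (A - shift p e ` B) (B - B_e)
     \<le> capped_rep_sum p (u + v) A B"
  unfolding capped_rep_sum_def sum.distrib[symmetric] reps_e_transform
  by (intro sum_mono) linarith

end

lemma pollard_bound_split:
  fixes t u a b :: nat
  assumes "t \<le> a" "t \<le> b"
  defines "j \<equiv> min t u"
  shows "t * (a + b - t) \<le> j * (a + b - j) + (t - j) * ((a - u) + (b - u) - (t - j))"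
proof (cases "t \<le> u")
  case False
  then obtain v a' b' where "t = u + v" "a = t + a'" "b = t + b'"
    using assms(1,2) le_Suc_ex by (metis nat_le_linear)
  then show ?thesis
    unfolding j_def by (simp add: algebra_simps)
qed (simp add: j_def)

lemma capped_rep_sum_one_card_one:
  assumes "A \<subseteq> {..<p}" "card B = 1" "0 < p"
  shows "capped_rep_sum p 1 A B = card A"
proof -
  have "finite A"
    using assms(1) finite_subset by blast
  have "finite B"
    using assms(2) by (intro card_ge_0_finite) simp
  have "capped_rep_sum p 1 A B = (\<Sum>x<p. reps p A B x)"
    unfolding capped_rep_sum_def using assms(2) reps_le_card_right[OF assms(1) \<open>finite B\<close>]
    by (intro sum.cong) (auto simp: min_def intro: le_antisym)
  then show ?thesis
    using assms(2) sum_reps[OF \<open>finite A\<close> \<open>finite B\<close> assms(3)] by simp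
qed

theorem pollard:
  assumes "prime p" and "A \<subseteq> {..<p}" "B \<subseteq> {..<p}" "card A + card B \<le> p"
    and "t \<le> card A" "t \<le> card B"
  shows "t * (card A + card B - t) \<le> capped_rep_sum p t A B"
  using assms(2-)
proof (induction "card B" arbitrary: A B t rule: less_induct)
  case less
  have p0: "0 < p" using \<open>prime p\<close> prime_gt_0_nat by blast
  consider "t = 0" | "card B = 1" "t = 1" | "0 < t" "2 \<le> card B"
    using less.prems(5) by linarith
  then show ?case
  proof cases
    case 1
    then show ?thesis by simp
  next
    case 2
    then show ?thesis
      using capped_rep_sum_one_card_one[OF less.prems(1) _ p0] by simp
  next
    case 3
    have "A \<noteq> {}" "A \<noteq> {..<p}"
      using 3 less.prems(3,4) by auto
    then obtain e where e: "e < p" "{b \<in> B. shift p e b \<in> A} \<noteq> {}" "{b \<in> B. shift p e b \<in> A} \<noteq> B"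
      using exists_proper_shift[OF \<open>prime p\<close> less.prems(1,2)] 3 by blast
    interpret e_transform p e A B
      using less.prems(1,2) e(1) by unfold_locales
    define u where "u = card B_e"
    define j where "j = min t u"
    have "B_e \<subset> B"
      using e(3) by blast
    then have u: "0 < u" "u < card B"
      unfolding u_def using e(2) finite_B by (auto simp: card_gt_0_iff psubset_card_mono)
    have A_e_sub: "A_e \<subseteq> {..<p}"
      using less.prems(1,2) shift_less[OF p0] by auto
    have "j * (card A_e + card B_e - j) \<le> capped_rep_sum p j A_e B_e"
      using u less.prems card_e_transform(1) card_mono[OF _ Un_upper1, of A "shift p e ` B"]
        finite_B A_e_sub
      by (intro less.hyps) (auto simp: j_def u_def)
    moreover have "(t - j) * (card (A - shift p e ` B) + card (B - B_e) - (t - j))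
        \<le> capped_rep_sum p (t - j) (A - shift p e ` B) (B - B_e)"
      using u less.prems card_e_transform(2,3)
      by (intro less.hyps) (auto simp: j_def u_def)
    moreover have "t * (card A + card B - t) \<le> j * (card A_e + card B_e - j)
        + (t - j) * (card (A - shift p e ` B) + card (B - B_e) - (t - j))"
      unfolding j_def u_def card_e_transform by (rule pollard_bound_split[OF less.prems(4,5)])
    ultimately show ?thesis
      using capped_rep_sum_e_transform[of j "t - j"] by (simp add: j_def)
  qed
qed

lemma sum_reps_on_le:
  assumes "prime p" "A \<subseteq> {..<p}" "B \<subseteq> {..<p}" "card A + card B \<le> p" "T \<subseteq> {..<p}"
    and "j \<le> card A" "j \<le> card B"
  shows "(\<Sum>n\<in>T. reps p A B n) + j * (card A + card B - j) \<le> card T * j + card A * card B"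
proof -
  have fin: "finite A" "finite B" "finite T"
    using assms(2,3,5) finite_subset by blast+
  have p0: "0 < p" using assms(1) prime_gt_0_nat by blast
  let ?excess = "\<lambda>n. reps p A B n - min j (reps p A B n)"
  have "(\<Sum>n\<in>T. reps p A B n) = (\<Sum>n\<in>T. min j (reps p A B n)) + (\<Sum>n\<in>T. ?excess n)"
    by (simp flip: sum.distrib)
  moreover have "(\<Sum>n\<in>T. min j (reps p A B n)) \<le> card T * j"
    using sum_bounded_above[of T "\<lambda>n. min j (reps p A B n)" j] by simp
  moreover have "(\<Sum>n\<in>T. ?excess n) \<le> (\<Sum>n<p. ?excess n)"
    using assms(5) by (intro sum_mono2) auto
  moreover have "capped_rep_sum p j A B + (\<Sum>n<p. ?excess n) = card A * card B"
    unfolding capped_rep_sum_def sum_reps[OF fin(1,2) p0, symmetric] sum.distrib[symmetric]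
    by (intro sum.cong) auto
  moreover have "j * (card A + card B - j) \<le> capped_rep_sum p j A B"
    using assms(1-4,6,7) by (rule pollard)
  ultimately show ?thesis
    by linarith
qed

subsection \<open>Optimising the truncation\<close>

text \<open>The ratio t (4s - t) / (s sqrt(s t)) peaks at t = 4s/3 with value 16 / (3 sqrt 3) < 3.08;
  the polynomial identity below is the certificate for 27 (t (4s - t))^2 <= 256 s^3 t.\<close>

lemma mult_diff_le_sqrt_bound:
  fixes s t :: real
  assumes "0 \<le> s" "0 \<le> t"
  shows "t * (4 * s - t) \<le> 3.08 * s * sqrt (s * t)"
proof (cases "t \<le> 4 * s")
  case True
  have "256 * s ^ 3 * t - 27 * (t * (4 * s - t)) ^ 2 = t * (3 * t - 4 * s) ^ 2 * (16 * s - 3 * t)"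
    by (simp add: algebra_simps power2_eq_square power3_eq_cube)
  also have "\<dots> \<ge> 0"
    using True assms by simp
  moreover have "s ^ 3 * t = s ^ 2 * (s * t)"
    by (simp add: power2_eq_square power3_eq_cube)
  ultimately have "(t * (4 * s - t)) ^ 2 \<le> 256 / 27 * (s ^ 2 * (s * t))"
    by linarith
  also have "\<dots> \<le> 3.08 ^ 2 * (s ^ 2 * (s * t))"
    using assms by (intro mult_right_mono) (auto simp: power2_eq_square)
  also have "\<dots> = 3.08 ^ 2 * s ^ 2 * sqrt (s * t) ^ 2"
    using assms by (simp only: real_sqrt_pow2 mult_nonneg_nonneg mult.assoc)
  also have "\<dots> = (3.08 * s * sqrt (s * t)) ^ 2"
    by (simp only: power_mult_distrib)
  finally show ?thesis
    by (rule power2_le_imp_le) (use assms in simp)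
next
  case False
  then have "t * (4 * s - t) \<le> 0"
    using assms by (simp add: mult_nonneg_nonpos)
  moreover have "0 \<le> 3.08 * s * sqrt (s * t)"
    using assms by simp
  ultimately show ?thesis
    by linarith
qed

lemma bound_by_optimal_truncation:
  fixes R s t :: nat
  assumes s: "2 \<le> s" and t: "1 \<le> t"
    and trunc: "\<And>j. j \<le> s \<Longrightarrow> R + j * (s + s - j) \<le> t * j + s * s"
  shows "real R < 0.93 * real s * sqrt (real s * real t)"
proof -
  have "1 \<le> real s * real t"
    using s t mult_mono[of 1 "real s" 1 "real t"] by simp
  then have "1 \<le> sqrt (real s * real t)"
    by simp
  then have Q: "2 \<le> real s * sqrt (real s * real t)"
    using s mult_mono[of 2 "real s" 1 "sqrt (real s * real t)"] by simp
  show ?thesis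
  proof (cases "2 * s \<le> t")
    case True
    have "(real s / 0.93) ^ 2 < real s * real t"
      using True s by (simp add: power2_eq_square field_simps)
    then have "real s < 0.93 * sqrt (real s * real t)"
      using real_less_rsqrt by force
    have "real R \<le> real s * real s"
      using trunc[of 0] by (simp flip: of_nat_mult)
    also have "\<dots> < real s * (0.93 * sqrt (real s * real t))"
      using \<open>real s < 0.93 * sqrt (real s * real t)\<close> s by simp
    finally show ?thesis
      by (simp add: mult_ac)
  next
    case False
    \<comment> \<open>the cap j closest to the optimum s - t/2\<close>
    define j where "j = (2 * s - t) div 2"
    have "j \<le> s"
      unfolding j_def by simp
    then have "real (R + j * (s + s - j)) \<le> real (t * j + s * s)"
      using trunc[of j] by (simp only: of_nat_le_iff)
    moreover have "real (j * (s + s - j)) = real j * (2 * real s - real j)"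
      using \<open>j \<le> s\<close> by (simp add: of_nat_diff)
    ultimately have "real R + real j * (2 * real s - real j) \<le> real t * real j + real s * real s"
      by (simp only: of_nat_add of_nat_mult)
    moreover have "0 \<le> 2 * real s - real t - 2 * real j" "2 * real s - real t - 2 * real j \<le> 1"
      using False unfolding j_def by linarith+
    then have "(2 * real s - real t - 2 * real j) ^ 2 \<le> 1"
      by (simp add: power_le_one)
    ultimately have "4 * real R \<le> real t * (4 * real s - real t) + 1"
      by (simp add: algebra_simps power2_eq_square)
    also have "\<dots> \<le> 3.08 * (real s * sqrt (real s * real t)) + 1"
      using mult_diff_le_sqrt_bound[of "real s" "real t"] by simp
    finally show ?thesis
      using Q by simp
  qed
qed

theorem lemma4:
  "\<exists>p0::nat. \<forall>p::nat. prime p \<and> p > p0 \<longrightarrow>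
     (\<forall>S T. S \<subseteq> {0..<p} \<and> real p / 3 < real (card S) \<and> real (card S) < 2 * real p / 5 \<and>
        T \<subseteq> {0..<p} \<and> T \<noteq> {} \<longrightarrow>
        real (\<Sum>n\<in>T. rep_count p S n) < 0.93 * real (card S) * sqrt (real (card S) * real (card T)))"
proof (intro exI[of _ 3] allI impI)
  fix p :: nat and S T :: "nat set"
  assume p: "prime p \<and> 3 < p"
    and H: "S \<subseteq> {0..<p} \<and> real p / 3 < real (card S) \<and> real (card S) < 2 * real p / 5 \<and>
      T \<subseteq> {0..<p} \<and> T \<noteq> {}"
  then have S: "S \<subseteq> {..<p}" and T: "T \<subseteq> {..<p}" "T \<noteq> {}"
    by auto
  \<comment> \<open>of the size constraints only these two consequences are needed\<close>
  have "2 \<le> card S" "card S + card S \<le> p"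
    using p H by linarith+
  moreover have "1 \<le> card T"
    using T finite_subset by (fastforce simp: Suc_le_eq card_gt_0_iff)
  ultimately show "real (\<Sum>n\<in>T. rep_count p S n) < 0.93 * real (card S) * sqrt (real (card S) * real (card T))"
    unfolding rep_count_eq_reps
    using sum_reps_on_le[OF _ S S _ T(1)] p by (intro bound_by_optimal_truncation) auto
qed

end
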